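(* For every $n\in\mathbb{N}$ and all words $A_1,A_2\in\mathsf{W}_\omega$ with $A_1\sim A_2$, we have $a_n(A_1)\sim a_n(A_2)$. Moreover, for all $n\in\mathbb{N}$, $A_1\in\mathsf{NF}$ and $A_2\in\mathsf{W}_\omega$ with $A_1\sim A_2$, we have $\Diamond_nA_1\sim a_n(A_2)$.
   Context: Words are finite strings over the alphabet $\mathbb{N}=\{0,1,2,\dots\}$; $\mathsf{W}_\omega$ is the set of all words, $\Lambda$ the empty word, $AB$ concatenation; $a_n\colon\mathsf{W}_\omega\to\mathsf{W}_\omega$ is $a_n(A)=An$. For $k\in\mathbb{N}$, $\mathsf{S}_k$ is the set of words all of whose symbols are $\ge k$. Given a linear preorder $\precsim$ with $A\sim B$ iff $A\precsim B\wedge B\precsim A$ and $A\prec B$ iff $A\precsim B\wedge\neg B\precsim A$, a finite sequence $(A_1,\dots,A_p)$ is lexicographically not greater than $(B_1,\dots,B_q)$ iff either $p\le q$ and $A_i\sim B_i$ for all $i\le p$, or there is $s<\min(p,q)$ with $A_i\sim B_i$ for $i\le s$ and $A_{s+1}\prec B_{s+1}$. A lexicographically maximal subsequence of a finite sequence is a subsequence that is lexicographically not less than every subsequence. The linear preorder $\precsim$ on $\mathsf{W}_\omega$ is defined by recursion on (largest symbol of $AB$) $-$ (smallest symbol of $AB$): $\Lambda\precsim\Lambda$; if $AB$ is nonempty with minimal symbol $n$, write uniquely $A=A_1n\cdots nA_k$, $B=B_1n\cdots nB_l$ ($k,l\ge1$) with $A_i,B_j\in\mathsf{S}_{n+1}$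 (possibly empty); let $C,D$ be lexicographically maximal subsequences of $(A_1,\dots,A_k)$, $(B_1,\dots,B_l)$; then $A\precsim B$ iff $C$ is lexicographically not greater than $D$. The set $\mathsf{NF}$: $\Lambda\in\mathsf{NF}$; a word with minimal symbol $n$, written $A_1n\cdots nA_k$ with $k\ge2$, $A_i\in\mathsf{S}_{n+1}$, is in $\mathsf{NF}$ iff $A_k\precsim\dots\precsim A_1$ and all $A_i\in\mathsf{NF}$. Every word is $\sim$-equivalent to exactly one word of $\mathsf{NF}$. For $A\in\mathsf{NF}$, $\Diamond_nA$ is the unique word of $\mathsf{NF}$ that is $\sim$-equivalent to $An$. *)

theory Defs
  imports Main
begin

type_synonym word = "nat list"

definition a_op :: "nat \<Rightarrow> word \<Rightarrow> word" where
  "a_op n A = A @ [n]"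

text \<open>Decomposition of a word at the occurrences of the symbol n:
  A = A_1 n A_2 n ... n A_k, returned as [A_1, ..., A_k] (k >= 1).\<close>

fun split_at_sym :: "nat \<Rightarrow> word \<Rightarrow> word list" where
  "split_at_sym n [] = [[]]"
| "split_at_sym n (x # xs) =
     (if x = n then [] # split_at_sym n xs
      else (case split_at_sym n xs of
              [] \<Rightarrow> [[x]]
            | (y # ys) \<Rightarrow> (x # y) # ys))"

definition lex_le :: "('a \<Rightarrow> 'a \<Rightarrow> bool) \<Rightarrow> 'a list \<Rightarrow> 'a list \<Rightarrow> bool" where
  "lex_le le xs ys \<longleftrightarrow>
     (length xs \<le> length ys \<and>
        (\<forall>i < length xs. le (xs ! i) (ys ! i) \<and> le (ys ! i) (xs ! i)))
   \<or> (\<exists>s < min (length xs) (length ys).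
        (\<forall>i < s. le (xs ! i) (ys ! i) \<and> le (ys ! i) (xs ! i)) \<and>
        (le (xs ! s) (ys ! s) \<and> \<not> le (ys ! s) (xs ! s)))"

definition is_lexmax :: "('a \<Rightarrow> 'a \<Rightarrow> bool) \<Rightarrow> 'a list \<Rightarrow> 'a list \<Rightarrow> bool" where
  "is_lexmax le xs C \<longleftrightarrow>
     C \<in> set (subseqs xs) \<and> (\<forall>D \<in> set (subseqs xs). lex_le le D C)"

text \<open>The recursion of the paper is on (largest symbol - smallest symbol) of AB.
  We implement it with an explicit fuel parameter; the actual relation below
  supplies fuel (max - min + 1) of AB, which is exactly enough: every recursive
  comparison of components X, Y (with all symbols in [n+1, max]) has
  max - min of XY strictly smaller.\<close>

fun word_le_fuel :: "nat \<Rightarrow> word \<Rightarrow> word \<Rightarrow> bool" where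
  "word_le_fuel 0 A B = (A @ B = [])"
| "word_le_fuel (Suc d) A B =
     (if A @ B = [] then True
      else
        (let n = Min (set (A @ B));
             le = word_le_fuel d;
             C = (SOME C. is_lexmax le (split_at_sym n A) C);
             D = (SOME D. is_lexmax le (split_at_sym n B) D)
         in lex_le le C D))"

definition word_le :: "word \<Rightarrow> word \<Rightarrow> bool" (infix "\<preceq>w" 50) where
  "A \<preceq>w B \<longleftrightarrow>
     word_le_fuel (if A @ B = [] then 0 else Max (set (A @ B)) - Min (set (A @ B)) + 1) A B"

definition word_equiv :: "word \<Rightarrow> word \<Rightarrow> bool" (infix "\<sim>w" 50) where
  "A \<sim>w B \<longleftrightarrow> A \<preceq>w B \<and> B \<preceq>w A"

inductive NF :: "word \<Rightarrow> bool" where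
  NF_empty: "NF []"
| NF_step: "\<lbrakk> A \<noteq> []; n = Min (set A); As = split_at_sym n A; 2 \<le> length As;
             \<forall>i. Suc i < length As \<longrightarrow> (As ! Suc i) \<preceq>w (As ! i);
             \<forall>X \<in> set As. NF X \<rbrakk> \<Longrightarrow> NF A"

definition diamond :: "nat \<Rightarrow> word \<Rightarrow> word" where
  "diamond n A = (THE B. NF B \<and> B \<sim>w (A @ [n]))"

end

theory Submission
  imports Defs "HOL-Library.List_Lexorder" "HOL-Library.Sublist"
begin

text \<open>
  A word A in S_m determines a finite rooted tree: split A at the symbol m, take the trees
  of the components at level m+1, and keep the lexicographically greatest subsequence of
  this list, i.e. the components not strictly dominated by a later one. By induction on the
  recursion defining the preorder, A \<preceq> B holds exactly when the tree of A is
  lexicographically below the tree of B, so A \<sim> B means equal trees. Appending a symbol n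
  changes the tree by an operation that depends on the tree alone, which gives the first
  claim. The components of a normal form are normal forms whose trees are non-increasing, so
  a normal form is determined by its tree; conversely, joining normal forms of the surviving
  components produces a normal form with the given tree. Hence \<Diamond>_n A is the normal form
  of A n, and the second claim reduces to the first.
\<close>

section \<open>Finite trees ordered lexicographically\<close>

datatype tree = Node "tree list"

fun tree_le :: "tree \<Rightarrow> tree \<Rightarrow> bool" and trees_le :: "tree list \<Rightarrow> tree list \<Rightarrow> bool" where
  "tree_le (Node xs) (Node ys) = trees_le xs ys"
| "trees_le [] ys = True"
| "trees_le (x # xs) [] = False"
| "trees_le (x # xs) (y # ys) = (if x = y then trees_le xs ys else tree_le x y)"

lemma tree_le_refl: "tree_le t t"
proof -
  have "trees_le xs xs" for xs by (induction xs) auto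
  then show ?thesis by (cases t) simp
qed

lemma tree_le_antisym: "tree_le s t \<Longrightarrow> tree_le t s \<Longrightarrow> s = t"
proof (induction s arbitrary: t)
  case (Node xs)
  obtain ys where t: "t = Node ys" by (cases t)
  have "trees_le xs ys \<Longrightarrow> trees_le ys xs \<Longrightarrow> xs = ys" using Node.IH
  proof (induction xs arbitrary: ys)
    case (Cons x xs)
    then obtain y ys' where "ys = y # ys'" by (cases ys) auto
    with Cons show ?case by (simp split: if_splits)
  qed (auto elim: trees_le.elims)
  with Node.prems t show ?case by simp
qed

lemma tree_le_trans: "tree_le r s \<Longrightarrow> tree_le s t \<Longrightarrow> tree_le r t"
proof (induction r arbitrary: s t)
  case (Node xs)
  obtain ys zs where s: "s = Node ys" and t: "t = Node zs" by (cases s, cases t)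
  have "trees_le xs ys \<Longrightarrow> trees_le ys zs \<Longrightarrow> trees_le xs zs" using Node.IH
  proof (induction xs arbitrary: ys zs)
    case (Cons x xs)
    obtain y ys' z zs' where ys: "ys = y # ys'" and zs: "zs = z # zs'"
      using Cons.prems(1,2) by (cases ys; cases zs) auto
    consider "x = y" "y = z" | "x = y" "y \<noteq> z" | "x \<noteq> y" "y = z" | "x \<noteq> y" "y \<noteq> z"
      by blast
    then show ?case
    proof cases
      case 1
      have "trees_le xs zs'"
        using Cons.IH[of ys' zs'] Cons.prems 1 ys zs by simp
      then show ?thesis using 1 ys zs by simp
    next
      case 4
      then have "tree_le x y" "tree_le y z" using Cons.prems(1,2) ys zs by simp_all
      moreover from this have "x \<noteq> z" using \<open>x \<noteq> y\<close> tree_le_antisym by blast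
      ultimately show ?thesis using Cons.prems(3) ys zs by simp
    qed (use Cons.prems(1,2) ys zs in simp_all)
  qed simp
  with Node.prems s t show ?case by simp
qed

lemma tree_le_total: "tree_le s t \<or> tree_le t s"
proof (induction s arbitrary: t)
  case (Node xs)
  obtain ys where t: "t = Node ys" by (cases t)
  have "trees_le xs ys \<or> trees_le ys xs" using Node.IH
  proof (induction xs arbitrary: ys)
    case (Cons x xs)
    show ?case
    proof (cases ys)
      case ys: (Cons y ys')
      have "tree_le x y \<or> tree_le y x" and "trees_le xs ys' \<or> trees_le ys' xs"
        using Cons.prems Cons.IH[of ys'] by simp_all
      with ys show ?thesis by auto
    qed simp
  qed simp
  with t show ?case by simp
qed

instantiation tree :: linorder
begin

definition less_eq_tree :: "tree \<Rightarrow> tree \<Rightarrow> bool" where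
  "less_eq_tree = tree_le"

definition less_tree :: "tree \<Rightarrow> tree \<Rightarrow> bool" where
  "less_tree s t \<longleftrightarrow> tree_le s t \<and> \<not> tree_le t s"

instance
  by standard (use tree_le_total in \<open>auto simp: less_eq_tree_def less_tree_def
      intro: tree_le_refl tree_le_trans tree_le_antisym\<close>)

end

lemma trees_le_iff_le: "trees_le xs ys \<longleftrightarrow> xs \<le> ys"
proof (induction xs arbitrary: ys)
  case (Cons x xs)
  then show ?case
    by (cases ys) (auto simp: less_eq_tree_def less_tree_def dest: tree_le_antisym)
qed simp

lemma Node_le_Node [simp]: "Node xs \<le> Node ys \<longleftrightarrow> xs \<le> ys"
  by (simp add: less_eq_tree_def trees_le_iff_le)

lemma Node_Nil_le [simp]: "Node [] \<le> t"
  by (cases t) simp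

lemma le_Node_Nil_iff [simp]: "t \<le> Node [] \<longleftrightarrow> t = Node []"
  by (cases t) simp

section \<open>Lexicographically greatest subsequences\<close>

fun greatest_subseq :: "'a::linorder list \<Rightarrow> 'a list" where
  "greatest_subseq [] = []"
| "greatest_subseq (x # xs) =
     (if \<forall>y\<in>set xs. y \<le> x then x # greatest_subseq xs else greatest_subseq xs)"

lemma set_greatest_subseq: "set (greatest_subseq xs) \<subseteq> set xs"
  by (induction xs) auto

lemma greatest_subseq_eq_Nil_iff [simp]: "greatest_subseq xs = [] \<longleftrightarrow> xs = []"
proof (induction xs)
  case (Cons x xs)
  then show ?case by (cases xs) auto
qed simp

lemma sorted_greatest_subseq: "sorted_wrt (\<ge>) (greatest_subseq xs)"
  by (induction xs) (use set_greatest_subseq in fastforce)+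

lemma greatest_subseq_sorted_id: "sorted_wrt (\<ge>) xs \<Longrightarrow> greatest_subseq xs = xs"
  by (induction xs) auto

lemma greatest_subseq_snoc:
  "greatest_subseq (ys @ [z]) = filter (\<lambda>y. z \<le> y) (greatest_subseq ys) @ [z]"
  by (induction ys) auto

lemma le_hd_greatest_subseq: "y \<in> set xs \<Longrightarrow> y \<le> hd (greatest_subseq xs)"
proof (induction xs arbitrary: y)
  case (Cons x xs)
  show ?case
  proof (cases "\<forall>y\<in>set xs. y \<le> x")
    case False
    then obtain w where "w \<in> set xs" "x \<le> w" by auto
    with Cons show ?thesis by (auto dest: Cons.IH intro: order_trans)
  qed (use Cons in auto)
qed simp

lemma le_append_self: "(xs::'a::linorder list) \<le> xs @ ys"
  by (induction xs) auto

lemma subseq_set_subset: "subseq xs ys \<Longrightarrow> set xs \<subseteq> set ys"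
  by (auto elim: list_emb_set)

lemma sorted_desc_le_Cons:
  fixes xs :: "'a::linorder list"
  assumes "sorted_wrt (\<ge>) xs" "\<forall>x\<in>set xs. x \<le> y"
  shows "xs \<le> y # xs"
  using assms
proof (induction xs)
  case (Cons x xs)
  then show ?case by (cases "x = y") auto
qed simp

lemma subseq_le_greatest_subseq: "subseq zs xs \<Longrightarrow> zs \<le> greatest_subseq xs"
proof (induction zs xs rule: list_emb.induct)
  case (list_emb_Cons zs xs x)
  show ?case
  proof (cases "\<forall>y\<in>set xs. y \<le> x")
    case True
    then have "greatest_subseq xs \<le> x # greatest_subseq xs"
      using set_greatest_subseq by (intro sorted_desc_le_Cons sorted_greatest_subseq) blast
    with True list_emb_Cons.IH show ?thesis by simp
  next
    case False
    with list_emb_Cons.IH show ?thesis by auto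
  qed
next
  case (list_emb_Cons2 x y zs xs)
  show ?case
  proof (cases "\<forall>w\<in>set xs. w \<le> y")
    case False
    then obtain w where "w \<in> set xs" "x < w" using list_emb_Cons2.hyps by auto
    then have "x < hd (greatest_subseq xs)"
      using le_hd_greatest_subseq by (blast intro: less_le_trans)
    moreover have "greatest_subseq xs \<noteq> []" using \<open>w \<in> set xs\<close> by auto
    ultimately show ?thesis using False by (cases "greatest_subseq xs") auto
  qed (use list_emb_Cons2 in simp)
qed simp

lemma subseq_map_greatest_subseq:
  obtains zs where "subseq zs xs" "map f zs = greatest_subseq (map f xs)"
proof (induction xs arbitrary: thesis)
  case (Cons x xs)
  obtain zs where zs: "subseq zs xs" "map f zs = greatest_subseq (map f xs)"
    using Cons.IH by blast
  show ?case
  proof (cases "\<forall>y\<in>set xs. f y \<le> f x")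
    case True
    with zs show ?thesis by (intro Cons.prems[of "x # zs"]) auto
  next
    case False
    with zs show ?thesis by (intro Cons.prems[of zs]) auto
  qed
qed (use list_emb_Nil in auto)

lemma filter_ge_snoc_mono:
  fixes a b :: "'a::linorder"
  assumes "a \<le> b"
  shows "filter (\<lambda>y. a \<le> y) xs @ [a] \<le> filter (\<lambda>y. b \<le> y) xs @ [b]"
proof (induction xs)
  case (Cons x xs)
  show ?case
  proof (cases "a \<le> x \<and> \<not> b \<le> x")
    case True
    then have "\<forall>y\<in>set (filter (\<lambda>y. b \<le> y) xs @ [b]). x < y" by auto
    with True show ?thesis by (cases "filter (\<lambda>y. b \<le> y) xs @ [b]") auto
  qed (use assms Cons in auto)
qed (use assms in \<open>simp add: less_le\<close>)

lemma greatest_subseq_snoc_mono: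
  "a \<le> b \<Longrightarrow> greatest_subseq (xs @ [a]) \<le> greatest_subseq (xs @ [b])"
  unfolding greatest_subseq_snoc by (rule filter_ge_snoc_mono)

lemma greatest_subseq_snoc_raise:
  assumes "a \<le> b"
  shows "greatest_subseq (butlast (greatest_subseq (xs @ [a])) @ [b]) = greatest_subseq (xs @ [b])"
proof -
  have "sorted_wrt (\<ge>) (filter (\<lambda>y. a \<le> y) (greatest_subseq xs))"
    by (intro sorted_wrt_filter sorted_greatest_subseq)
  with assms show ?thesis
    by (simp add: greatest_subseq_snoc greatest_subseq_sorted_id)
      (auto intro!: filter_cong intro: order_trans)
qed

section \<open>Splitting words at a symbol\<close>

lemma split_at_sym_ne_Nil [simp]: "split_at_sym n A \<noteq> []"
  by (induction A) (auto split: list.split)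

lemma split_at_sym_Cons [simp]:
  "split_at_sym n (x # A) =
     (if x = n then [] # split_at_sym n A
      else (x # hd (split_at_sym n A)) # tl (split_at_sym n A))"
  using split_at_sym_ne_Nil[of n A] by (auto split: list.split)

declare split_at_sym.simps(2) [simp del]

lemma split_at_sym_notin: "n \<notin> set A \<Longrightarrow> split_at_sym n A = [A]"
  by (induction A) auto

lemma split_at_sym_components:
  "X \<in> set (split_at_sym n A) \<Longrightarrow> subseq X A \<and> n \<notin> set X"
proof (induction A arbitrary: X)
  case (Cons x A)
  show ?case
  proof (cases "x = n")
    case False
    then have "X = x # hd (split_at_sym n A) \<or> X \<in> set (tl (split_at_sym n A))"
      using Cons.prems by simp
    moreover have "hd (split_at_sym n A) \<in> set (split_at_sym n A)"
      and "set (tl (split_at_sym n A)) \<subseteq> set (split_at_sym n A)"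
      by (simp_all add: list.set_sel(2) subsetI)
    ultimately show ?thesis using Cons.IH False by fastforce
  qed (use Cons in auto)
qed simp

lemma set_split_at_sym_component:
  "X \<in> set (split_at_sym n A) \<Longrightarrow> set X \<subseteq> set A \<and> n \<notin> set X"
  using split_at_sym_components subseq_set_subset by blast

lemma split_at_sym_component_shorter:
  assumes "X \<in> set (split_at_sym n A)" "n \<in> set A"
  shows "length X < length A"
proof -
  have "subseq X A" "X \<noteq> A" using split_at_sym_components[OF assms(1)] assms(2) by auto
  then show ?thesis using list_emb_length subseq_same_length by fastforce
qed

lemma two_le_length_split_at_sym: "n \<in> set A \<Longrightarrow> 2 \<le> length (split_at_sym n A)"
proof (induction A)
  case (Cons x A)
  then show ?case
    by (cases "x = n") (auto simp: Suc_le_eq)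
qed simp

lemma split_at_sym_snoc_same: "split_at_sym n (A @ [n]) = split_at_sym n A @ [[]]"
proof (induction A)
  case (Cons x A)
  then show ?case by (cases "x = n") simp_all
qed simp

lemma split_at_sym_snoc:
  "m \<noteq> n \<Longrightarrow>
   split_at_sym n (A @ [m]) = butlast (split_at_sym n A) @ [last (split_at_sym n A) @ [m]]"
proof (induction A)
  case (Cons x A)
  obtain Y Ys where "split_at_sym n A = Y # Ys" by (cases "split_at_sym n A") auto
  with Cons show ?case by (cases "x = n"; cases Ys) auto
qed simp

fun join_at_sym :: "nat \<Rightarrow> word list \<Rightarrow> word" where
  "join_at_sym n [] = []"
| "join_at_sym n [X] = X"
| "join_at_sym n (X # Y # Xs) = X @ n # join_at_sym n (Y # Xs)"

lemma split_at_sym_join_at_sym: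
  "Xs \<noteq> [] \<Longrightarrow> \<forall>X\<in>set Xs. n \<notin> set X \<Longrightarrow> split_at_sym n (join_at_sym n Xs) = Xs"
proof -
  have "n \<notin> set X \<Longrightarrow> split_at_sym n (X @ n # B) = X # split_at_sym n B" for X B
    by (induction X) auto
  then show "Xs \<noteq> [] \<Longrightarrow> \<forall>X\<in>set Xs. n \<notin> set X \<Longrightarrow> ?thesis"
    by (induction n Xs rule: join_at_sym.induct) (auto simp: split_at_sym_notin)
qed

lemma join_at_sym_split_at_sym: "join_at_sym n (split_at_sym n A) = A"
proof (induction A)
  case (Cons x A)
  obtain Y Ys where "split_at_sym n A = Y # Ys" by (cases "split_at_sym n A") auto
  with Cons show ?case by (cases "x = n"; cases Ys) auto
qed simp

lemma set_join_at_sym: "set (join_at_sym n Xs) \<subseteq> insert n (\<Union>X\<in>set Xs. set X)"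
  by (induction n Xs rule: join_at_sym.induct) auto

lemma sym_in_join_at_sym: "2 \<le> length Xs \<Longrightarrow> n \<in> set (join_at_sym n Xs)"
  by (induction n Xs rule: join_at_sym.induct) auto

section \<open>The tree of a word\<close>

definition in_S :: "nat \<Rightarrow> word \<Rightarrow> bool" where
  "in_S k A \<longleftrightarrow> (\<forall>x\<in>set A. k \<le> x)"

lemma in_S_Nil [simp]: "in_S k []"
  by (simp add: in_S_def)

lemma in_S_0 [simp]: "in_S 0 A"
  by (simp add: in_S_def)

lemma in_S_mono: "in_S k A \<Longrightarrow> m \<le> k \<Longrightarrow> in_S m A"
  by (auto simp: in_S_def)

lemma in_S_Suc_notin: "in_S (Suc n) A \<Longrightarrow> n \<notin> set A"
  unfolding in_S_def using Suc_n_not_le_n by blast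

lemma in_S_Suc: "in_S m A \<Longrightarrow> m \<notin> set A \<Longrightarrow> in_S (Suc m) A"
  unfolding in_S_def by (metis Suc_leI le_neq_implies_less)

lemma in_S_split_at_sym_component:
  assumes "in_S m A" "X \<in> set (split_at_sym m A)"
  shows "in_S (Suc m) X"
proof (rule in_S_Suc)
  show "in_S m X" "m \<notin> set X"
    using assms set_split_at_sym_component[OF assms(2)] by (auto simp: in_S_def)
qed

text \<open>Outside S_m the value Node [] is junk.\<close>

function tree_of :: "nat \<Rightarrow> word \<Rightarrow> tree" where
  "tree_of m A =
     (if A = [] \<or> \<not> in_S m A then Node []
      else Node (greatest_subseq (map (tree_of (Suc m)) (split_at_sym m A))))"
  by auto
termination
proof (relation "measure (\<lambda>(m, A). length A + (Max (insert 0 (set A)) - m))")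
  fix m A X
  assume "\<not> (A = [] \<or> \<not> in_S m A)" and X: "X \<in> set (split_at_sym m A)"
  then have A: "A \<noteq> []" "in_S m A" by auto
  have Max_le: "Max (insert 0 (set X)) \<le> Max (insert 0 (set A))"
    using set_split_at_sym_component[OF X] by (intro Max_mono) auto
  have "length X + (Max (insert 0 (set X)) - Suc m) < length A + (Max (insert 0 (set A)) - m)"
  proof (cases "m \<in> set A")
    case True
    with split_at_sym_component_shorter[OF X] Max_le show ?thesis by linarith
  next
    case False
    then have "X = A" using X split_at_sym_notin by simp
    from A obtain a where "a \<in> set A" "m < a"
      using False by (cases A) (auto simp: in_S_def order_le_less)
    then have "m < Max (insert 0 (set A))" by (auto intro: less_le_trans)
    with \<open>X = A\<close> show ?thesis by simp
  qed
  then show "((Suc m, X), m, A) \<in> measure (\<lambda>(m, A). length A + (Max (insert 0 (set A)) - m))"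
    by simp
qed simp

declare tree_of.simps [simp del]

definition children :: "nat \<Rightarrow> word \<Rightarrow> tree list" where
  "children m A = greatest_subseq (map (tree_of (Suc m)) (split_at_sym m A))"

lemma tree_of_Nil [simp]: "tree_of m [] = Node []"
  by (subst tree_of.simps) simp

lemma tree_of_eq_Node_children: "in_S m A \<Longrightarrow> A \<noteq> [] \<Longrightarrow> tree_of m A = Node (children m A)"
  by (subst tree_of.simps) (simp add: children_def)

lemma children_ne_Nil [simp]: "children m A \<noteq> []"
  by (simp add: children_def)

lemma tree_of_eq_Node_Nil_iff: "in_S m A \<Longrightarrow> tree_of m A = Node [] \<longleftrightarrow> A = []"
  by (cases "A = []") (simp_all add: tree_of_eq_Node_children)

lemma children_notin: "m \<notin> set A \<Longrightarrow> children m A = [tree_of (Suc m) A]"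
  by (simp add: children_def split_at_sym_notin)

lemma tree_of_in_S_Suc:
  "in_S (Suc m) A \<Longrightarrow> A \<noteq> [] \<Longrightarrow> tree_of m A = Node [tree_of (Suc m) A]"
proof -
  assume "in_S (Suc m) A" "A \<noteq> []"
  moreover from this have "in_S m A" "m \<notin> set A" by (auto simp: in_S_def)
  ultimately show ?thesis by (simp add: tree_of_eq_Node_children children_notin)
qed

lemma tree_of_le_shift:
  assumes "in_S k A" "in_S k B" "m \<le> k"
  shows "tree_of m A \<le> tree_of m B \<longleftrightarrow> tree_of k A \<le> tree_of k B"
  using assms
proof (induction "k - m" arbitrary: m)
  case (Suc d)
  then have S: "in_S (Suc m) A" "in_S (Suc m) B" "Suc m \<le> k" by (auto intro: in_S_mono)
  have "tree_of m A \<le> tree_of m B \<longleftrightarrow> tree_of (Suc m) A \<le> tree_of (Suc m) B"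
    using S tree_of_eq_Node_Nil_iff[OF S(1)]
    by (cases "A = []"; cases "B = []") (auto simp: tree_of_in_S_Suc less_le)
  also have "\<dots> \<longleftrightarrow> tree_of k A \<le> tree_of k B"
    using Suc.hyps(2) Suc.prems S(3) by (intro Suc.hyps(1)) auto
  finally show ?case .
qed simp

lemma tree_of_eq_shift:
  assumes "in_S k A" "in_S k B" "m \<le> k"
  shows "tree_of m A = tree_of m B \<longleftrightarrow> tree_of k A = tree_of k B"
  using tree_of_le_shift[OF assms] tree_of_le_shift[OF assms(2,1,3)] by (auto intro: antisym)

lemma children_ne_singleton_Node_Nil:
  assumes "m \<in> set A"
  shows "children m A \<noteq> [Node []]"
proof
  obtain Xs X where S: "split_at_sym m A = Xs @ [X]"
    by (metis rev_exhaust split_at_sym_ne_Nil)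
  with two_le_length_split_at_sym[OF assms] have "Xs \<noteq> []" by auto
  assume ch: "children m A = [Node []]"
  then have "tree_of (Suc m) X = Node []"
    by (simp add: children_def S greatest_subseq_snoc)
  with ch have "greatest_subseq (map (tree_of (Suc m)) Xs) = []"
    by (simp add: children_def S greatest_subseq_snoc)
  with \<open>Xs \<noteq> []\<close> show False by simp
qed

lemma singleton_Node_Nil_le: "ts \<noteq> [] \<Longrightarrow> [Node []] \<le> ts"
  by (cases ts) (auto simp: less_le)

lemma le_singleton_Node_Nil_iff: "ts \<le> [Node []] \<longleftrightarrow> ts = [] \<or> ts = [Node []]"
  by (cases ts) (auto simp: less_le)

lemma tree_of_le_iff_children_le:
  assumes "in_S n A" "in_S n B" "n \<in> set (A @ B)"
  shows "tree_of n A \<le> tree_of n B \<longleftrightarrow> children n A \<le> children n B"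
proof (cases "A = [] \<or> B = []")
  case True
  have "children n [] = [Node []]" by (simp add: children_def)
  with True assms tree_of_eq_Node_Nil_iff[OF assms(1)] children_ne_singleton_Node_Nil[of n A]
  show ?thesis by (auto simp: singleton_Node_Nil_le le_singleton_Node_Nil_iff)
qed (simp add: tree_of_eq_Node_children assms)

section \<open>The preorder on words is the order on trees\<close>

lemma lex_le_Nil [simp]: "lex_le le [] ys"
  by (simp add: lex_le_def)

lemma lex_le_Cons_Nil [simp]: "\<not> lex_le le (x # xs) []"
  by (simp add: lex_le_def)

lemma lex_le_Cons_Cons [simp]:
  "lex_le le (x # xs) (y # ys) \<longleftrightarrow>
     le x y \<and> \<not> le y x \<or> le x y \<and> le y x \<and> lex_le le xs ys"
  unfolding lex_le_def by (auto simp: All_less_Suc2 Ex_less_Suc2)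

lemma lex_le_iff_map_le:
  fixes f :: "'a \<Rightarrow> 'b::linorder"
  assumes "\<forall>x\<in>set xs \<union> set ys. \<forall>y\<in>set xs \<union> set ys. le x y \<longleftrightarrow> f x \<le> f y"
  shows "lex_le le xs ys \<longleftrightarrow> map f xs \<le> map f ys"
  using assms
proof (induction xs arbitrary: ys)
  case (Cons x xs)
  then show ?case by (cases ys) auto
qed simp

lemma some_is_lexmax:
  fixes f :: "'a \<Rightarrow> 'b::linorder"
  assumes "\<forall>x\<in>set xs. \<forall>y\<in>set xs. le x y \<longleftrightarrow> f x \<le> f y"
  defines "C \<equiv> SOME C. is_lexmax le xs C"
  shows "subseq C xs" and "map f C = greatest_subseq (map f xs)"
proof -
  have cmp: "lex_le le D E \<longleftrightarrow> map f D \<le> map f E" if "subseq D xs" "subseq E xs" for D E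
    using that assms subseq_set_subset by (intro lex_le_iff_map_le) blast
  obtain C0 where C0: "subseq C0 xs" "map f C0 = greatest_subseq (map f xs)"
    by (rule subseq_map_greatest_subseq)
  have "is_lexmax le xs C0"
    unfolding is_lexmax_def using C0 cmp subseq_le_greatest_subseq[OF subseq_map] by auto
  then have lexmax: "is_lexmax le xs C"
    unfolding C_def by (rule someI)
  then show C: "subseq C xs" by (simp add: is_lexmax_def)
  have "lex_le le C0 C"
    using lexmax C0(1) by (simp add: is_lexmax_def)
  then have "greatest_subseq (map f xs) \<le> map f C"
    using C0 C cmp by simp
  moreover have "map f C \<le> greatest_subseq (map f xs)"
    using C by (intro subseq_le_greatest_subseq subseq_map)
  ultimately show "map f C = greatest_subseq (map f xs)" by simp
qed

lemma word_le_fuel_Suc_iff_children_le: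
  assumes "A @ B \<noteq> []" "n = Min (set (A @ B))"
    and agree: "\<forall>X\<in>set (split_at_sym n A) \<union> set (split_at_sym n B).
      \<forall>Y\<in>set (split_at_sym n A) \<union> set (split_at_sym n B).
        word_le_fuel d X Y \<longleftrightarrow> tree_of (Suc n) X \<le> tree_of (Suc n) Y"
  shows "word_le_fuel (Suc d) A B \<longleftrightarrow> children n A \<le> children n B"
proof -
  define f where "f = tree_of (Suc n)"
  define C where "C = (SOME C. is_lexmax (word_le_fuel d) (split_at_sym n A) C)"
  define D where "D = (SOME D. is_lexmax (word_le_fuel d) (split_at_sym n B) D)"
  have "\<forall>X\<in>set (split_at_sym n A). \<forall>Y\<in>set (split_at_sym n A). word_le_fuel d X Y \<longleftrightarrow> f X \<le> f Y"
    and "\<forall>X\<in>set (split_at_sym n B). \<forall>Y\<in>set (split_at_sym n B). word_le_fuel d X Y \<longleftrightarrow> f X \<le> f Y"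
    using agree unfolding f_def by blast+
  note C = some_is_lexmax[OF this(1), folded C_def, unfolded f_def, folded children_def f_def]
    and D = some_is_lexmax[OF this(2), folded D_def, unfolded f_def, folded children_def f_def]
  have "word_le_fuel (Suc d) A B \<longleftrightarrow> lex_le (word_le_fuel d) C D"
    using assms(1) by (simp only: word_le_fuel.simps(2) Let_def if_False
        assms(2)[symmetric] C_def[symmetric] D_def[symmetric])
  also have "\<dots> \<longleftrightarrow> map f C \<le> map f D"
  proof (rule lex_le_iff_map_le)
    have "set C \<union> set D \<subseteq> set (split_at_sym n A) \<union> set (split_at_sym n B)"
      using C(1) D(1) subseq_set_subset by blast
    with agree show "\<forall>X\<in>set C \<union> set D. \<forall>Y\<in>set C \<union> set D. word_le_fuel d X Y \<longleftrightarrow> f X \<le> f Y"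
      unfolding f_def by blast
  qed
  finally show ?thesis using C(2) D(2) by simp
qed

lemma word_le_fuel_iff_tree_le:
  "in_S m A \<Longrightarrow> in_S m B \<Longrightarrow> \<forall>x\<in>set (A @ B). x < m + d \<Longrightarrow>
   word_le_fuel d A B \<longleftrightarrow> tree_of m A \<le> tree_of m B"
proof (induction d arbitrary: m A B)
  case 0
  then have "set (A @ B) = {}" unfolding in_S_def
    by (metis Un_iff add_0_right all_not_in_conv not_le set_append)
  then show ?case by simp
next
  case (Suc d)
  show ?case
  proof (cases "A @ B = []")
    case False
    define n where "n = Min (set (A @ B))"
    have n: "n \<in> set (A @ B)" "in_S n A" "in_S n B"
      using False Min_in[of "set (A @ B)"] by (auto simp: n_def in_S_def)
    have "m \<le> n" using n(1) Suc.prems(1,2) by (auto simp: in_S_def)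
    have "word_le_fuel d X Y \<longleftrightarrow> tree_of (Suc n) X \<le> tree_of (Suc n) Y"
      if "X \<in> set (split_at_sym n A) \<union> set (split_at_sym n B)"
        "Y \<in> set (split_at_sym n A) \<union> set (split_at_sym n B)" for X Y
    proof (rule Suc.IH)
      show "in_S (Suc n) X" "in_S (Suc n) Y"
        using that n(2,3) in_S_split_at_sym_component by blast+
      have "set (X @ Y) \<subseteq> set (A @ B)"
        using that set_split_at_sym_component by fastforce
      with Suc.prems(3) \<open>m \<le> n\<close> show "\<forall>x\<in>set (X @ Y). x < Suc n + d" by fastforce
    qed
    then have "word_le_fuel (Suc d) A B \<longleftrightarrow> children n A \<le> children n B"
      using False n_def by (intro word_le_fuel_Suc_iff_children_le) blast+
    also have "\<dots> \<longleftrightarrow> tree_of n A \<le> tree_of n B"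
      using tree_of_le_iff_children_le[OF n(2,3,1)] by simp
    also have "\<dots> \<longleftrightarrow> tree_of m A \<le> tree_of m B"
      using tree_of_le_shift[OF n(2,3) \<open>m \<le> n\<close>] by simp
    finally show ?thesis .
  qed simp
qed

lemma word_le_iff_tree_le:
  assumes "in_S m A" "in_S m B"
  shows "A \<preceq>w B \<longleftrightarrow> tree_of m A \<le> tree_of m B"
proof (cases "A @ B = []")
  case False
  define k where "k = Min (set (A @ B))"
  have k: "in_S k A" "in_S k B" "m \<le> k"
    using False assms by (auto simp: k_def in_S_def)
  have "\<forall>x\<in>set (A @ B). x < k + (Max (set (A @ B)) - k + 1)"
  proof
    fix x assume "x \<in> set (A @ B)"
    then have "k \<le> x" "x \<le> Max (set (A @ B))" by (simp_all add: k_def)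
    then show "x < k + (Max (set (A @ B)) - k + 1)" by linarith
  qed
  then have "A \<preceq>w B \<longleftrightarrow> tree_of k A \<le> tree_of k B"
    using False word_le_fuel_iff_tree_le[OF k(1,2)] by (simp add: word_le_def k_def)
  also have "\<dots> \<longleftrightarrow> tree_of m A \<le> tree_of m B"
    using tree_of_le_shift[OF k] by simp
  finally show ?thesis .
qed (simp add: word_le_def)

lemma word_equiv_iff_tree_eq: "A \<sim>w B \<longleftrightarrow> tree_of 0 A = tree_of 0 B"
  by (auto simp: word_equiv_def word_le_iff_tree_le[of 0] intro: antisym)

section \<open>Appending a symbol\<close>

text \<open>The empty word has tree Node [], but its split [[]] has children [Node []].\<close>

definition tree_children :: "tree \<Rightarrow> tree list" where
  "tree_children t = (case t of Node [] \<Rightarrow> [Node []] | Node ts \<Rightarrow> ts)"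

fun tree_snoc :: "nat \<Rightarrow> tree \<Rightarrow> tree" where
  "tree_snoc 0 t = Node (tree_children t @ [Node []])"
| "tree_snoc (Suc k) t =
     Node (greatest_subseq (butlast (tree_children t) @ [tree_snoc k (last (tree_children t))]))"

lemma children_eq_tree_children: "in_S m A \<Longrightarrow> children m A = tree_children (tree_of m A)"
  by (cases "A = []")
    (simp_all add: children_def tree_children_def tree_of_eq_Node_children split: list.split)

lemma children_snoc_same: "children m (A @ [m]) = children m A @ [Node []]"
  by (simp add: children_def split_at_sym_snoc_same greatest_subseq_snoc)

lemma children_butlast_last:
  "children m A =
     greatest_subseq (map (tree_of (Suc m)) (butlast (split_at_sym m A))
       @ [tree_of (Suc m) (last (split_at_sym m A))])"
  unfolding children_def by (cases "split_at_sym m A" rule: rev_cases) simp_all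

lemma children_snoc:
  "m \<noteq> n \<Longrightarrow> children m (A @ [n]) =
     greatest_subseq (map (tree_of (Suc m)) (butlast (split_at_sym m A))
       @ [tree_of (Suc m) (last (split_at_sym m A) @ [n])])"
  by (simp add: children_def split_at_sym_snoc)

lemma in_S_last_split_at_sym: "in_S m A \<Longrightarrow> in_S (Suc m) (last (split_at_sym m A))"
  by (simp add: in_S_split_at_sym_component)

lemma tree_of_le_tree_of_snoc: "in_S m A \<Longrightarrow> m \<le> n \<Longrightarrow> tree_of m A \<le> tree_of m (A @ [n])"
proof (induction "n - m" arbitrary: m A)
  case 0
  then have "n = m" by simp
  with 0 show ?case
    by (cases "A = []") (simp_all add: tree_of_eq_Node_children in_S_def children_snoc_same le_append_self)
next
  case (Suc k)
  then have "m \<noteq> n" "Suc m \<le> n" "in_S m (A @ [n])" by (auto simp: in_S_def)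
  let ?X = "last (split_at_sym m A)"
  have "tree_of (Suc m) ?X \<le> tree_of (Suc m) (?X @ [n])"
    using Suc in_S_last_split_at_sym \<open>Suc m \<le> n\<close> by simp
  then have "children m A \<le> children m (A @ [n])"
    unfolding children_snoc[OF \<open>m \<noteq> n\<close>] children_butlast_last[of m A]
    by (rule greatest_subseq_snoc_mono)
  with Suc.prems \<open>in_S m (A @ [n])\<close> show ?case
    by (cases "A = []") (simp_all add: tree_of_eq_Node_children)
qed

lemma tree_of_snoc:
  "in_S m A \<Longrightarrow> m \<le> n \<Longrightarrow> tree_of m (A @ [n]) = tree_snoc (n - m) (tree_of m A)"
proof (induction "n - m" arbitrary: m A)
  case 0
  then have "n = m" "in_S m (A @ [n])" by (auto simp: in_S_def)
  then show ?case
    using 0 by (simp add: tree_of_eq_Node_children children_snoc_same children_eq_tree_children)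
next
  case (Suc k)
  then have "m \<noteq> n" "Suc m \<le> n" "k = n - Suc m" "in_S m (A @ [n])" by (auto simp: in_S_def)
  define f where "f = tree_of (Suc m)"
  define X where "X = last (split_at_sym m A)"
  define L where "L = map f (butlast (split_at_sym m A))"
  define K where "K = tree_children (tree_of m A)"
  have X: "in_S (Suc m) X" using Suc.prems(1) by (simp add: X_def in_S_last_split_at_sym)
  have K: "K = greatest_subseq (L @ [f X])"
    using children_eq_tree_children[OF Suc.prems(1)] children_butlast_last[of m A]
    by (simp add: K_def L_def X_def f_def)
  have snoc: "f (X @ [n]) = tree_snoc k (f X)"
    unfolding f_def using Suc.hyps(1)[OF \<open>k = n - Suc m\<close> X \<open>Suc m \<le> n\<close>]
    by (simp add: \<open>k = n - Suc m\<close>)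
  \<comment> \<open>appending only raises the last child, so the children it dominated stay dominated\<close>
  have "f X \<le> f (X @ [n])"
    unfolding f_def using X \<open>Suc m \<le> n\<close> by (rule tree_of_le_tree_of_snoc)
  then have "greatest_subseq (L @ [f (X @ [n])]) = greatest_subseq (butlast K @ [f (X @ [n])])"
    unfolding K by (rule greatest_subseq_snoc_raise[symmetric])
  also have "\<dots> = greatest_subseq (butlast K @ [tree_snoc k (last K)])"
    by (simp add: K snoc greatest_subseq_snoc)
  finally show ?case
    using children_snoc[OF \<open>m \<noteq> n\<close>, of A] \<open>in_S m (A @ [n])\<close> \<open>Suc k = n - m\<close>[symmetric]
    by (simp add: tree_of_eq_Node_children K_def L_def X_def f_def)
qed

section \<open>Normal forms\<close>

lemma NF_nonempty:
  assumes "NF A" "A \<noteq> []"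
  defines "n \<equiv> Min (set A)"
  shows "2 \<le> length (split_at_sym n A)"
    and "\<forall>X\<in>set (split_at_sym n A). NF X"
    and "children n A = map (tree_of (Suc n)) (split_at_sym n A)"
proof -
  let ?As = "split_at_sym n A"
  show "2 \<le> length ?As" "\<forall>X\<in>set ?As. NF X"
    using assms by (auto elim: NF.cases)
  have "in_S n A" using assms(2) by (simp add: n_def in_S_def)
  have "map (tree_of (Suc n)) ?As ! Suc i \<le> map (tree_of (Suc n)) ?As ! i"
    if "Suc i < length ?As" for i
  proof -
    have "?As ! Suc i \<preceq>w ?As ! i"
      using assms that by (auto elim: NF.cases)
    moreover have "in_S (Suc n) (?As ! Suc i)" "in_S (Suc n) (?As ! i)"
      using that \<open>in_S n A\<close> in_S_split_at_sym_component by simp_all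
    ultimately show ?thesis using that by (simp add: word_le_iff_tree_le)
  qed
  then have "sorted_wrt (\<ge>) (map (tree_of (Suc n)) ?As)"
    by (simp add: sorted_wrt_iff_nth_Suc_transp transp_def)
  then show "children n A = map (tree_of (Suc n)) ?As"
    by (simp add: children_def greatest_subseq_sorted_id)
qed

text \<open>At the smaller of two distinct minima, the word missing that symbol has a single child,
  whereas a nonempty normal form has at least two.\<close>

lemma NF_Min_eq:
  assumes "NF A" "NF B" "A \<noteq> []" "B \<noteq> []" "in_S m A" "in_S m B"
    and "tree_of m A = tree_of m B"
  shows "Min (set A) = Min (set B)"
proof (rule ccontr)
  define n where "n = Min (set A)"
  define n' where "n' = Min (set B)"
  define k where "k = min n n'"
  have n: "n \<in> set A" "in_S n A" and n': "n' \<in> set B" "in_S n' B"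
    using assms(3,4) by (auto simp: n_def n'_def in_S_def)
  have "m \<le> k" using n(1) n'(1) assms(5,6) by (auto simp: k_def in_S_def)
  have k: "in_S k A" "in_S k B" using n(2) n'(2) by (auto simp: k_def intro: in_S_mono)
  have "children k A = children k B"
    using assms(7) tree_of_eq_shift[OF k \<open>m \<le> k\<close>] assms(3,4) k
    by (simp add: tree_of_eq_Node_children)
  moreover have "2 \<le> length (children n A)" "2 \<le> length (children n' B)"
    using NF_nonempty[OF assms(1,3)] NF_nonempty[OF assms(2,4)] by (simp_all add: n_def n'_def)
  moreover assume "n \<noteq> n'"
  then have "k \<notin> set A \<or> k \<notin> set B" "k = n \<or> k = n'"
    using n(2) n'(2) unfolding k_def in_S_def
    by (cases "n < n'"; fastforce simp: min_def)+
  ultimately show False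
    using children_notin[of k A] children_notin[of k B] by auto
qed

lemma NF_unique:
  "NF A \<Longrightarrow> NF B \<Longrightarrow> in_S m A \<Longrightarrow> in_S m B \<Longrightarrow> tree_of m A = tree_of m B \<Longrightarrow> A = B"
proof (induction arbitrary: B m rule: NF.induct)
  case NF_empty
  then show ?case using tree_of_eq_Node_Nil_iff[of m B] by simp
next
  case (NF_step A n As)
  let ?Bs = "split_at_sym n B"
  have "NF A" using NF_step.IH by (intro NF.NF_step[OF NF_step.hyps(1-5)]) blast
  have "B \<noteq> []" using NF_step tree_of_eq_Node_Nil_iff by auto
  have n: "n = Min (set B)"
    using NF_Min_eq[OF \<open>NF A\<close> NF_step.prems(1) NF_step.hyps(1) \<open>B \<noteq> []\<close> NF_step.prems(2-4)]
      NF_step.hyps(2) by simp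
  have "in_S n A" unfolding NF_step.hyps(2) by (simp add: in_S_def)
  moreover have "in_S n B" unfolding n by (simp add: in_S_def)
  moreover have "m \<le> n"
    using NF_step.hyps(1,2) NF_step.prems(2) by (auto simp: in_S_def)
  ultimately have "tree_of n A = tree_of n B"
    using NF_step.prems(4) tree_of_eq_shift by blast
  then have map_eq: "map (tree_of (Suc n)) As = map (tree_of (Suc n)) ?Bs"
    using NF_nonempty(3)[OF \<open>NF A\<close> NF_step.hyps(1)] NF_nonempty(3)[OF NF_step.prems(1) \<open>B \<noteq> []\<close>]
      NF_step.hyps(1-3) \<open>in_S n A\<close> \<open>in_S n B\<close> \<open>B \<noteq> []\<close> n
    by (simp add: tree_of_eq_Node_children)
  have "As = ?Bs"
  proof (rule nth_equalityI)
    show len: "length As = length ?Bs"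
      using map_eq by (metis length_map)
    fix i assume "i < length As"
    then have X: "As ! i \<in> set As" and Y: "?Bs ! i \<in> set ?Bs"
      using len by auto
    show "As ! i = ?Bs ! i"
    proof (rule NF_step.IH[rule_format, OF X, THEN conjunct2, rule_format])
      show "NF (?Bs ! i)"
        using NF_nonempty(2)[OF NF_step.prems(1) \<open>B \<noteq> []\<close>] Y n by simp
      show "in_S (Suc n) (As ! i)" "in_S (Suc n) (?Bs ! i)"
        using X Y \<open>in_S n A\<close> \<open>in_S n B\<close> NF_step.hyps(3) in_S_split_at_sym_component by blast+
      show "tree_of (Suc n) (As ! i) = tree_of (Suc n) (?Bs ! i)"
        using map_eq \<open>i < length As\<close> len by (metis nth_map)
    qed
  qed
  then show ?case
    using NF_step.hyps(3) join_at_sym_split_at_sym by metis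
qed

lemma in_S_join_at_sym:
  "\<forall>X\<in>set Xs. in_S (Suc n) X \<Longrightarrow> in_S n (join_at_sym n Xs)"
  using set_join_at_sym[of n Xs] by (fastforce simp: in_S_def)

lemma tree_of_join_at_sym:
  assumes "Xs \<noteq> []" "Xs \<noteq> [[]]" "\<forall>X\<in>set Xs. in_S (Suc n) X"
    and "sorted_wrt (\<ge>) (map (tree_of (Suc n)) Xs)"
  shows "tree_of n (join_at_sym n Xs) = Node (map (tree_of (Suc n)) Xs)"
proof (cases "2 \<le> length Xs")
  case True
  have "\<forall>X\<in>set Xs. n \<notin> set X" using assms(3) in_S_Suc_notin by blast
  with assms(1) have "split_at_sym n (join_at_sym n Xs) = Xs" by (rule split_at_sym_join_at_sym)
  moreover have "join_at_sym n Xs \<noteq> []" using sym_in_join_at_sym[OF True, of n] by auto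
  ultimately show ?thesis
    using assms(3,4) in_S_join_at_sym[OF assms(3)]
    by (simp add: tree_of_eq_Node_children children_def greatest_subseq_sorted_id)
next
  case False
  with assms(1,2) obtain X where "Xs = [X]" "X \<noteq> []"
    by (cases Xs) (auto simp: Suc_le_eq)
  with assms(3) show ?thesis by (simp add: tree_of_in_S_Suc)
qed

lemma NF_join_at_sym:
  assumes "Xs \<noteq> []" "\<forall>X\<in>set Xs. NF X \<and> in_S (Suc n) X"
    and "sorted_wrt (\<ge>) (map (tree_of (Suc n)) Xs)"
  shows "NF (join_at_sym n Xs)"
proof (cases "2 \<le> length Xs")
  case True
  define N where "N = join_at_sym n Xs"
  have "n \<in> set N" "in_S n N" unfolding N_def
    using sym_in_join_at_sym[OF True] in_S_join_at_sym assms(2) by auto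
  then have "Min (set N) = n" by (auto simp: in_S_def intro: Min_eqI)
  have "\<forall>X\<in>set Xs. n \<notin> set X" using assms(2) in_S_Suc_notin by blast
  with assms(1) have split: "split_at_sym n N = Xs"
    unfolding N_def by (rule split_at_sym_join_at_sym)
  show ?thesis
    unfolding N_def[symmetric]
  proof (rule NF.NF_step[OF _ \<open>Min (set N) = n\<close>[symmetric] split[symmetric] True])
    show "N \<noteq> []" using \<open>n \<in> set N\<close> by auto
    show "\<forall>X\<in>set Xs. NF X" using assms(2) by blast
    show "\<forall>i. Suc i < length Xs \<longrightarrow> Xs ! Suc i \<preceq>w Xs ! i"
    proof (intro allI impI)
      fix i assume i: "Suc i < length Xs"
      then have "tree_of (Suc n) (Xs ! Suc i) \<le> tree_of (Suc n) (Xs ! i)"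
        using assms(3) by (simp add: sorted_wrt_iff_nth_less)
      moreover have "in_S (Suc n) (Xs ! Suc i)" "in_S (Suc n) (Xs ! i)"
        using assms(2) i by simp_all
      ultimately show "Xs ! Suc i \<preceq>w Xs ! i" by (simp add: word_le_iff_tree_le)
    qed
  qed
next
  case False
  with assms(1,2) show ?thesis by (cases Xs) (auto simp: Suc_le_eq)
qed

lemma NF_join_at_sym_children:
  assumes "in_S n A" "n \<in> set A" "\<forall>X\<in>set Xs. NF X \<and> in_S (Suc n) X"
    and children: "map (tree_of (Suc n)) Xs = children n A"
  shows "NF (join_at_sym n Xs)" "in_S n (join_at_sym n Xs)"
    and "tree_of n (join_at_sym n Xs) = tree_of n A"
proof -
  have "Xs \<noteq> []" using children children_ne_Nil[of n A] by (metis list.map(1))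
  moreover have "Xs \<noteq> [[]]"
    using children children_ne_singleton_Node_Nil[OF assms(2)] by auto
  moreover have "sorted_wrt (\<ge>) (map (tree_of (Suc n)) Xs)"
    using children sorted_greatest_subseq by (simp add: children_def)
  moreover have "A \<noteq> []" using assms(2) by auto
  ultimately show "NF (join_at_sym n Xs)" "tree_of n (join_at_sym n Xs) = tree_of n A"
    using assms(3) children by (simp_all add: NF_join_at_sym tree_of_join_at_sym
        tree_of_eq_Node_children[OF assms(1)])
  show "in_S n (join_at_sym n Xs)"
    using assms(3) by (simp add: in_S_join_at_sym)
qed

lemma NF_exists: "in_S m A \<Longrightarrow> \<exists>N. NF N \<and> in_S m N \<and> tree_of m N = tree_of m A"
proof (induction "length A" arbitrary: A m rule: less_induct)
  case less
  show ?case
  proof (cases "A = []")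
    case False
    define n where "n = Min (set A)"
    define f where "f = tree_of (Suc n)"
    define As where "As = split_at_sym n A"
    have n: "n \<in> set A" "in_S n A" "m \<le> n"
      using False less.prems by (auto simp: n_def in_S_def)
    have "\<forall>X\<in>set As. \<exists>N. NF N \<and> in_S (Suc n) N \<and> f N = f X"
      using less.hyps split_at_sym_component_shorter[OF _ n(1)]
        in_S_split_at_sym_component[OF n(2)]
      unfolding As_def f_def by blast
    then obtain g where g: "\<forall>X\<in>set As. NF (g X) \<and> in_S (Suc n) (g X) \<and> f (g X) = f X"
      by metis
    obtain Xs where Xs: "subseq Xs (map g As)" "map f Xs = greatest_subseq (map f (map g As))"
      by (rule subseq_map_greatest_subseq)
    have "map f (map g As) = map f As"
      unfolding map_map by (rule map_cong) (use g in auto)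
    then have "map f Xs = children n A"
      using Xs(2) by (simp only: children_def As_def f_def)
    moreover have "\<forall>X\<in>set Xs. NF X \<and> in_S (Suc n) X"
      using subseq_set_subset[OF Xs(1)] g by auto
    ultimately have "NF (join_at_sym n Xs)" "in_S n (join_at_sym n Xs)"
      and "tree_of n (join_at_sym n Xs) = tree_of n A"
      using NF_join_at_sym_children[OF n(2,1)] unfolding f_def by blast+
    then show ?thesis
      using tree_of_eq_shift[OF _ n(2) n(3)] in_S_mono[OF _ n(3)] by blast
  qed (use NF_empty in auto)
qed

lemma diamond_equiv: "diamond n A \<sim>w A @ [n]"
proof -
  obtain N where "NF N" "tree_of 0 N = tree_of 0 (A @ [n])"
    using NF_exists[of 0 "A @ [n]"] by auto
  then have "\<exists>!B. NF B \<and> B \<sim>w A @ [n]"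
    using NF_unique[of _ _ 0] by (auto simp: word_equiv_iff_tree_eq)
  then show ?thesis
    unfolding diamond_def by (rule theI'[THEN conjunct2])
qed

theorem proposition1:
  shows "(\<forall>(n::nat) (A1::word) (A2::word). A1 \<sim>w A2 \<longrightarrow> a_op n A1 \<sim>w a_op n A2)
       \<and> (\<forall>(n::nat) (A1::word) (A2::word). NF A1 \<longrightarrow> A1 \<sim>w A2 \<longrightarrow> diamond n A1 \<sim>w a_op n A2)"
proof -
  have snoc: "a_op n A1 \<sim>w a_op n A2" if "A1 \<sim>w A2" for n A1 A2
    using that by (simp add: word_equiv_iff_tree_eq a_op_def tree_of_snoc)
  moreover have "diamond n A1 \<sim>w a_op n A2" if "A1 \<sim>w A2" for n A1 A2
    using diamond_equiv snoc[OF that] by (simp add: word_equiv_iff_tree_eq a_op_def)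
  ultimately show ?thesis by blast
qed

end
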